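(* Let $(\mathfrak g,[\cdot,\cdot],\alpha,\varepsilon)$ be a color Hom-Lie algebra and $\rho$ a representation of $\mathfrak g$ on $(M,\beta)$. Let $M^*$ be the (graded) dual of $M$, $\tilde\beta:M^*\to M^*$, $\tilde\beta(f)=f\circ\beta$, and $\tilde\rho:\mathfrak g\to\mathrm{End}(M^* )$, $\tilde\rho(x)(f)=-\varepsilon(x,f)\,f\circ\rho(x)$ for homogeneous $x,f$. Then $\tilde\rho$ is a representation of $\mathfrak g$ on $(M^*,\tilde\beta)$ if and only if $\rho(x)\circ\rho(\alpha(y))-\varepsilon(x,y)\rho(y)\circ\rho(\alpha(x))=\beta\circ\rho([x,y])$ for all homogeneous $x,y\in\mathfrak g$.
   Context: $\mathbb K$ is a field of characteristic zero and $\Gamma$ an abelian group. A bicharacter is a map $\varepsilon:\Gamma\times\Gamma\to\mathbb K\setminus\{0\}$ with $\varepsilon(a,b)\varepsilon(b,a)=1$, $\varepsilon(a,b+c)=\varepsilon(a,b)\varepsilon(a,c)$, $\varepsilon(a+b,c)=\varepsilon(a,c)\varepsilon(b,c)$; for homogeneous elements $\varepsilon(x,y)=\varepsilon(\deg x,\deg y)$. A color Hom-Lie algebra $(\mathfrak g,[\cdot,\cdot],\alpha,\varepsilon)$: $\Gamma$-graded space, even bilinear bracket, even linear $\alpha$, with $[x,y]=-\varepsilon(x,y)[y,x]$ and $\varepsilon(z,x)[\alpha(x),[y,z]]+\varepsilon(x,y)[\alpha(y),[z,x]]+\varepsilon(y,z)[\alpha(z),[x,y]]=0$. For a $\Gamma$-graded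 space $M$ and even linear $\beta:M\to M$, a representation of $\mathfrak g$ on $(M,\beta)$ is an even linear map $\rho:\mathfrak g\to\mathfrak{gl}(M)$ with $\rho([x,y])\circ\beta=\rho(\alpha(x))\circ\rho(y)-\varepsilon(x,y)\rho(\alpha(y))\circ\rho(x)$ for homogeneous $x,y$. The graded dual $M^*$ has as degree-$\gamma$ elements the linear forms $f$ with $f(M_\delta)=0$ unless $\gamma+\delta=0$. *)

theory Defs
  imports Complex_Main "HOL-Library.Function_Algebras"
begin

definition lin_on :: "('k \<Rightarrow> 'u::ab_group_add \<Rightarrow> 'u) \<Rightarrow> ('k \<Rightarrow> 'w::ab_group_add \<Rightarrow> 'w)
    \<Rightarrow> 'u set \<Rightarrow> ('u \<Rightarrow> 'w) \<Rightarrow> bool" where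
  "lin_on s1 s2 V f \<longleftrightarrow>
     (\<forall>u\<in>V. \<forall>v\<in>V. f (u + v) = f u + f v) \<and> (\<forall>c. \<forall>v\<in>V. f (s1 c v) = s2 c (f v))"

definition graded_space :: "('k::field \<Rightarrow> 'v::ab_group_add \<Rightarrow> 'v) \<Rightarrow> ('G::ab_group_add \<Rightarrow> 'v set) \<Rightarrow> bool" where
  "graded_space s G \<longleftrightarrow> vector_space s \<and>
     (\<forall>\<gamma>. 0 \<in> G \<gamma> \<and> (\<forall>u\<in>G \<gamma>. \<forall>v\<in>G \<gamma>. u + v \<in> G \<gamma>) \<and> (\<forall>c. \<forall>v\<in>G \<gamma>. s c v \<in> G \<gamma>)) \<and>
     (\<forall>v. \<exists>!c. finite {\<gamma>. c \<gamma> \<noteq> 0} \<and> (\<forall>\<gamma>. c \<gamma> \<in> G \<gamma>) \<and> v = (\<Sum>\<gamma>\<in>{\<gamma>. c \<gamma> \<noteq> 0}. c \<gamma>))"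

definition bicharacter :: "('G::ab_group_add \<Rightarrow> 'G \<Rightarrow> 'k::field) \<Rightarrow> bool" where
  "bicharacter \<epsilon> \<longleftrightarrow> (\<forall>a b. \<epsilon> a b \<noteq> 0) \<and> (\<forall>a b. \<epsilon> a b * \<epsilon> b a = 1) \<and>
     (\<forall>a b c. \<epsilon> a (b + c) = \<epsilon> a b * \<epsilon> a c) \<and> (\<forall>a b c. \<epsilon> (a + b) c = \<epsilon> a c * \<epsilon> b c)"

definition color_hom_lie :: "('k::field \<Rightarrow> 'g::ab_group_add \<Rightarrow> 'g) \<Rightarrow> ('G::ab_group_add \<Rightarrow> 'g set)
    \<Rightarrow> ('g \<Rightarrow> 'g \<Rightarrow> 'g) \<Rightarrow> ('g \<Rightarrow> 'g) \<Rightarrow> ('G \<Rightarrow> 'G \<Rightarrow> 'k) \<Rightarrow> bool" where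
  "color_hom_lie s G br \<alpha> \<epsilon> \<longleftrightarrow> graded_space s G \<and> bicharacter \<epsilon> \<and>
     (\<forall>x. lin_on s s UNIV (br x)) \<and> (\<forall>y. lin_on s s UNIV (\<lambda>x. br x y)) \<and>
     (\<forall>a b x y. x \<in> G a \<longrightarrow> y \<in> G b \<longrightarrow> br x y \<in> G (a + b)) \<and>
     lin_on s s UNIV \<alpha> \<and> (\<forall>a x. x \<in> G a \<longrightarrow> \<alpha> x \<in> G a) \<and>
     (\<forall>a b x y. x \<in> G a \<longrightarrow> y \<in> G b \<longrightarrow> br x y = - s (\<epsilon> a b) (br y x)) \<and>
     (\<forall>a b c x y z. x \<in> G a \<longrightarrow> y \<in> G b \<longrightarrow> z \<in> G c \<longrightarrow>
        s (\<epsilon> c a) (br (\<alpha> x) (br y z)) + s (\<epsilon> a b) (br (\<alpha> y) (br z x))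
        + s (\<epsilon> b c) (br (\<alpha> z) (br x y)) = 0)"

definition is_rep :: "('k::field \<Rightarrow> 'g::ab_group_add \<Rightarrow> 'g) \<Rightarrow> ('G::ab_group_add \<Rightarrow> 'g set)
    \<Rightarrow> ('g \<Rightarrow> 'g \<Rightarrow> 'g) \<Rightarrow> ('g \<Rightarrow> 'g) \<Rightarrow> ('G \<Rightarrow> 'G \<Rightarrow> 'k)
    \<Rightarrow> ('k \<Rightarrow> 'v::ab_group_add \<Rightarrow> 'v) \<Rightarrow> 'v set \<Rightarrow> ('G \<Rightarrow> 'v set)
    \<Rightarrow> ('g \<Rightarrow> 'v \<Rightarrow> 'v) \<Rightarrow> ('v \<Rightarrow> 'v) \<Rightarrow> bool" where
  "is_rep s G br \<alpha> \<epsilon> sV V GV \<rho> \<beta> \<longleftrightarrow>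
     (\<forall>x. \<forall>v\<in>V. \<rho> x v \<in> V) \<and> (\<forall>x. lin_on sV sV V (\<rho> x)) \<and>
     (\<forall>x y. \<forall>v\<in>V. \<rho> (x + y) v = \<rho> x v + \<rho> y v) \<and>
     (\<forall>c x. \<forall>v\<in>V. \<rho> (s c x) v = sV c (\<rho> x v)) \<and>
     (\<forall>a b x v. x \<in> G a \<longrightarrow> v \<in> GV b \<longrightarrow> \<rho> x v \<in> GV (a + b)) \<and>
     (\<forall>a b x y. x \<in> G a \<longrightarrow> y \<in> G b \<longrightarrow>
        (\<forall>v\<in>V. \<rho> (br x y) (\<beta> v) = \<rho> (\<alpha> x) (\<rho> y v) - sV (\<epsilon> a b) (\<rho> (\<alpha> y) (\<rho> x v))))"

definition dual_scale :: "'k::field \<Rightarrow> ('m \<Rightarrow> 'k) \<Rightarrow> ('m \<Rightarrow> 'k)" where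
  "dual_scale c f = (\<lambda>m. c * f m)"

definition dual_deg :: "('k::field \<Rightarrow> 'm::ab_group_add \<Rightarrow> 'm) \<Rightarrow> ('G::ab_group_add \<Rightarrow> 'm set)
    \<Rightarrow> 'G \<Rightarrow> ('m \<Rightarrow> 'k) set" where
  "dual_deg s GM \<gamma> = {f. lin_on s (*) UNIV f \<and> (\<forall>\<delta>. \<gamma> + \<delta> \<noteq> 0 \<longrightarrow> (\<forall>m\<in>GM \<delta>. f m = 0))}"

definition graded_dual :: "('k::field \<Rightarrow> 'm::ab_group_add \<Rightarrow> 'm) \<Rightarrow> ('G::ab_group_add \<Rightarrow> 'm set)
    \<Rightarrow> ('m \<Rightarrow> 'k) set" where
  "graded_dual s GM = {f. \<exists>S c. finite S \<and> (\<forall>\<gamma>\<in>S. c \<gamma> \<in> dual_deg s GM \<gamma>) \<and> f = (\<Sum>\<gamma>\<in>S. c \<gamma>)}"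

end

theory Submission
  imports Defs
begin

text \<open>On a homogeneous form f of degree \<gamma>, both sides of the representation identity for the
  dual action are f composed with a map on M, times bicharacter factors which, using
  \<open>\<epsilon>(a,b)\<epsilon>(b,a) = 1\<close>, collapse to the same nonzero scalar \<open>-\<epsilon>(a,\<gamma>)\<epsilon>(b,\<gamma>)\<close>. So the identity
  at f says exactly that f does not distinguish \<open>\<beta>(\<rho>([x,y])m)\<close> from
  \<open>\<rho>(x)\<rho>(\<alpha> y)m - \<epsilon>(x,y)\<rho>(y)\<rho>(\<alpha> x)m\<close>. Homogeneous forms separate points (apply a linear
  functional to a nonzero homogeneous component), which gives one direction; for the other,
  both sides are additive in f and the graded dual is spanned by homogeneous forms.\<close>

lemma lin_on_zero:
  assumes "lin_on s1 s2 V f" "0 \<in> V"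
  shows "f 0 = 0"
proof -
  have "f (0 + 0) = f 0 + f 0" using assms unfolding lin_on_def by blast
  then show ?thesis by simp
qed

lemma lin_on_diff:
  assumes "lin_on s1 s2 UNIV f"
  shows "f (u - v) = f u - f v"
proof -
  have "f (u - v + v) = f (u - v) + f v" using assms unfolding lin_on_def by blast
  then show ?thesis by (simp add: eq_diff_eq)
qed

lemma vector_space_ex_functional:
  fixes s :: "'k::field \<Rightarrow> 'v::ab_group_add \<Rightarrow> 'v"
  assumes "vector_space s" and "u \<noteq> 0"
  shows "\<exists>g. lin_on s (*) UNIV g \<and> g u \<noteq> (0::'k)"
proof -
  have "vector_space ((*) :: 'k \<Rightarrow> 'k \<Rightarrow> 'k)"
    by unfold_locales (auto simp: algebra_simps)
  then interpret vector_space_pair s "(*) :: 'k \<Rightarrow> 'k \<Rightarrow> 'k"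
    using assms(1) by (simp add: vector_space_pair_def)
  have "vs1.independent {u}" using assms(2) by simp
  from linear_independent_extend[OF this, of "\<lambda>_. 1"]
  obtain g where "Vector_Spaces.linear s (*) g" "g u = 1" by auto
  then show ?thesis unfolding lin_on_def Vector_Spaces.linear_iff by (intro exI[of _ g]) auto
qed

definition homogeneous_decomp :: "('G \<Rightarrow> 'v::ab_group_add set) \<Rightarrow> ('G \<Rightarrow> 'v) \<Rightarrow> 'v \<Rightarrow> bool" where
  "homogeneous_decomp G c v \<longleftrightarrow>
     finite {\<gamma>. c \<gamma> \<noteq> 0} \<and> (\<forall>\<gamma>. c \<gamma> \<in> G \<gamma>) \<and> v = (\<Sum>\<gamma>\<in>{\<gamma>. c \<gamma> \<noteq> 0}. c \<gamma>)"

definition homogeneous_component :: "('G \<Rightarrow> 'v::ab_group_add set) \<Rightarrow> 'G \<Rightarrow> 'v \<Rightarrow> 'v" where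
  "homogeneous_component G \<delta> v = (THE c. homogeneous_decomp G c v) \<delta>"

lemma graded_space_ex1_decomp: "graded_space s G \<Longrightarrow> \<exists>!c. homogeneous_decomp G c v"
  unfolding graded_space_def homogeneous_decomp_def by blast

lemma homogeneous_component_eq:
  assumes "graded_space s G" "homogeneous_decomp G c v"
  shows "homogeneous_component G \<delta> v = c \<delta>"
proof -
  have "(THE c. homogeneous_decomp G c v) = c"
    by (rule the1_equality) (use graded_space_ex1_decomp[OF assms(1)] assms(2) in auto)
  then show ?thesis unfolding homogeneous_component_def by simp
qed

lemma homogeneous_decomp_sum:
  assumes "homogeneous_decomp G c v" "finite S" "{\<gamma>. c \<gamma> \<noteq> 0} \<subseteq> S"
  shows "v = (\<Sum>\<gamma>\<in>S. c \<gamma>)"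
  using assms sum.mono_neutral_left[OF assms(2,3)] unfolding homogeneous_decomp_def by auto

lemma homogeneous_decomp_add:
  assumes "graded_space s G" "homogeneous_decomp G c v" "homogeneous_decomp G d w"
  shows "homogeneous_decomp G (\<lambda>\<gamma>. c \<gamma> + d \<gamma>) (v + w)"
proof -
  let ?S = "{\<gamma>. c \<gamma> \<noteq> 0} \<union> {\<gamma>. d \<gamma> \<noteq> 0}"
  have fin: "finite ?S" using assms(2,3) unfolding homogeneous_decomp_def by auto
  have supp: "{\<gamma>. c \<gamma> + d \<gamma> \<noteq> 0} \<subseteq> ?S" by auto
  have "v + w = (\<Sum>\<gamma>\<in>?S. c \<gamma> + d \<gamma>)"
    using homogeneous_decomp_sum[OF assms(2) fin] homogeneous_decomp_sum[OF assms(3) fin]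
    by (simp add: sum.distrib)
  also have "\<dots> = (\<Sum>\<gamma>\<in>{\<gamma>. c \<gamma> + d \<gamma> \<noteq> 0}. c \<gamma> + d \<gamma>)"
    using fin supp by (intro sum.mono_neutral_right) auto
  finally show ?thesis
    using assms fin supp unfolding homogeneous_decomp_def graded_space_def
    by (auto intro: finite_subset)
qed

lemma homogeneous_decomp_scale:
  assumes "graded_space s G" "homogeneous_decomp G c v"
  shows "homogeneous_decomp G (\<lambda>\<gamma>. s k (c \<gamma>)) (s k v)"
proof -
  interpret vector_space s using assms(1) unfolding graded_space_def by auto
  let ?S = "{\<gamma>. c \<gamma> \<noteq> 0}"
  have fin: "finite ?S" using assms(2) unfolding homogeneous_decomp_def by auto
  have supp: "{\<gamma>. s k (c \<gamma>) \<noteq> 0} \<subseteq> ?S" by auto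
  have "s k v = (\<Sum>\<gamma>\<in>?S. s k (c \<gamma>))"
    using assms(2) unfolding homogeneous_decomp_def by (simp add: scale_sum_right)
  also have "\<dots> = (\<Sum>\<gamma>\<in>{\<gamma>. s k (c \<gamma>) \<noteq> 0}. s k (c \<gamma>))"
    using fin supp by (intro sum.mono_neutral_right) auto
  finally show ?thesis
    using assms fin supp unfolding homogeneous_decomp_def graded_space_def
    by (auto intro: finite_subset)
qed

lemma homogeneous_decomp_homogeneous:
  assumes "graded_space s G" "v \<in> G \<delta>"
  shows "homogeneous_decomp G (\<lambda>\<gamma>. if \<gamma> = \<delta> then v else 0) v"
proof -
  have "{\<gamma>. (if \<gamma> = \<delta> then v else 0) \<noteq> 0} \<subseteq> {\<delta>}" by auto
  moreover have "v = (\<Sum>\<gamma>\<in>{\<gamma>. (if \<gamma> = \<delta> then v else 0) \<noteq> 0}. if \<gamma> = \<delta> then v else 0)"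
    by (cases "v = 0") auto
  ultimately show ?thesis
    using assms unfolding homogeneous_decomp_def graded_space_def by (auto intro: finite_subset)
qed

lemma lin_on_homogeneous_component:
  assumes "graded_space s G"
  shows "lin_on s s UNIV (homogeneous_component G \<delta>)"
  unfolding lin_on_def
proof (intro conjI ballI allI)
  fix v w
  obtain c d where "homogeneous_decomp G c v" "homogeneous_decomp G d w"
    using graded_space_ex1_decomp[OF assms] by meson
  then show "homogeneous_component G \<delta> (v + w) =
      homogeneous_component G \<delta> v + homogeneous_component G \<delta> w"
    using homogeneous_decomp_add[OF assms] homogeneous_component_eq[OF assms] by metis
next
  fix k v
  obtain c where "homogeneous_decomp G c v" using graded_space_ex1_decomp[OF assms] by meson
  then show "homogeneous_component G \<delta> (s k v) = s k (homogeneous_component G \<delta> v)"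
    using homogeneous_decomp_scale[OF assms] homogeneous_component_eq[OF assms] by metis
qed

lemma homogeneous_component_other:
  assumes "graded_space s G" "v \<in> G \<delta>'" "\<delta>' \<noteq> \<delta>"
  shows "homogeneous_component G \<delta> v = 0"
  using homogeneous_component_eq[OF assms(1) homogeneous_decomp_homogeneous[OF assms(1,2)]] assms(3)
  by simp

lemma homogeneous_component_nonzero:
  assumes "graded_space s G" "v \<noteq> 0"
  shows "\<exists>\<delta>. homogeneous_component G \<delta> v \<noteq> 0"
proof -
  obtain c where c: "homogeneous_decomp G c v" using graded_space_ex1_decomp[OF assms(1)] by meson
  then have "{\<gamma>. c \<gamma> \<noteq> 0} \<noteq> {}" using assms(2) unfolding homogeneous_decomp_def by force
  then show ?thesis using homogeneous_component_eq[OF assms(1) c] by auto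
qed

lemma graded_space_induct [consumes 1, case_names zero homogeneous add]:
  assumes "graded_space s G" "P 0" "\<And>\<gamma> v. v \<in> G \<gamma> \<Longrightarrow> P v"
    "\<And>v w. P v \<Longrightarrow> P w \<Longrightarrow> P (v + w)"
  shows "P v"
proof -
  obtain c where c: "homogeneous_decomp G c v" using graded_space_ex1_decomp[OF assms(1)] by meson
  have "P (\<Sum>\<gamma>\<in>S. c \<gamma>)" if "finite S" for S
    using that
  proof induction
    case (insert \<gamma> S)
    have "c \<gamma> \<in> G \<gamma>" using c unfolding homogeneous_decomp_def by blast
    with insert show ?case using assms(3,4) by simp
  qed (simp add: assms(2))
  then show ?thesis using c unfolding homogeneous_decomp_def by auto
qed

lemma dual_deg_separating:
  assumes "graded_space s G" "v \<noteq> 0"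
  shows "\<exists>\<gamma> f. f \<in> dual_deg s G \<gamma> \<and> f v \<noteq> 0"
proof -
  obtain \<delta> where \<delta>: "homogeneous_component G \<delta> v \<noteq> 0"
    using homogeneous_component_nonzero[OF assms] by blast
  have "vector_space s" using assms(1) unfolding graded_space_def by blast
  then obtain g where g: "lin_on s (*) UNIV g" "g (homogeneous_component G \<delta> v) \<noteq> 0"
    using vector_space_ex_functional[OF _ \<delta>] by blast
  let ?f = "g \<circ> homogeneous_component G \<delta>"
  have "lin_on s (*) UNIV ?f"
    using g(1) lin_on_homogeneous_component[OF assms(1), of \<delta>] unfolding lin_on_def by simp
  moreover have "?f m = 0" if "m \<in> G \<delta>'" "- \<delta> + \<delta>' \<noteq> 0" for \<delta>' m
    using homogeneous_component_other[OF assms(1) that(1)] that(2) lin_on_zero[OF g(1)] by simp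
  ultimately have "?f \<in> dual_deg s G (- \<delta>)" unfolding dual_deg_def by blast
  with g(2) show ?thesis by (metis comp_apply)
qed

lemma dual_deg_eqI:
  assumes "graded_space s G" "\<And>\<gamma> f. f \<in> dual_deg s G \<gamma> \<Longrightarrow> f u = f w"
  shows "u = w"
proof (rule ccontr)
  assume "u \<noteq> w"
  then obtain \<gamma> f where f: "f \<in> dual_deg s G \<gamma>" "f (u - w) \<noteq> 0"
    using dual_deg_separating[OF assms(1), of "u - w"] by auto
  have "lin_on s (*) UNIV f" using f(1) unfolding dual_deg_def by blast
  then show False using f assms(2)[OF f(1)] lin_on_diff by fastforce
qed

lemma dual_deg_zero: "0 \<in> dual_deg s G \<gamma>"
  unfolding dual_deg_def lin_on_def by auto

lemma dual_deg_add:
  assumes "f \<in> dual_deg s G \<gamma>" "h \<in> dual_deg s G \<gamma>"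
  shows "f + h \<in> dual_deg s G \<gamma>"
  using assms unfolding dual_deg_def lin_on_def
proof (intro CollectI conjI allI impI ballI; elim CollectE conjE)
  fix \<delta> m assume "\<gamma> + \<delta> \<noteq> 0" "m \<in> G \<delta>"
    and "\<forall>\<delta>. \<gamma> + \<delta> \<noteq> 0 \<longrightarrow> (\<forall>m\<in>G \<delta>. f m = 0)"
    and "\<forall>\<delta>. \<gamma> + \<delta> \<noteq> 0 \<longrightarrow> (\<forall>m\<in>G \<delta>. h m = 0)"
  then show "(f + h) m = 0" by simp
qed (simp_all add: algebra_simps)

lemma dual_deg_comp:
  assumes "lin_on s s UNIV \<beta>" "\<forall>\<delta>. \<forall>v\<in>G \<delta>. \<beta> v \<in> G \<delta>" "f \<in> dual_deg s G \<gamma>"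
  shows "f \<circ> \<beta> \<in> dual_deg s G \<gamma>"
  using assms unfolding dual_deg_def lin_on_def by auto

lemma dual_deg_subset_graded_dual: "dual_deg s G \<gamma> \<subseteq> graded_dual s G"
  unfolding graded_dual_def by (auto intro!: exI[of _ "{\<gamma>}"])

lemma graded_dual_zero: "0 \<in> graded_dual s G"
  unfolding graded_dual_def by (auto intro!: exI[of _ "{}"])

lemma graded_dual_add:
  assumes "f \<in> graded_dual s G" "h \<in> graded_dual s G"
  shows "f + h \<in> graded_dual s G"
proof -
  obtain S c where S: "finite S" "\<forall>\<gamma>\<in>S. c \<gamma> \<in> dual_deg s G \<gamma>" "f = (\<Sum>\<gamma>\<in>S. c \<gamma>)"
    using assms(1) unfolding graded_dual_def by blast
  obtain T d where T: "finite T" "\<forall>\<gamma>\<in>T. d \<gamma> \<in> dual_deg s G \<gamma>" "h = (\<Sum>\<gamma>\<in>T. d \<gamma>)"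
    using assms(2) unfolding graded_dual_def by blast
  define e where "e \<gamma> = (if \<gamma> \<in> S then c \<gamma> else 0) + (if \<gamma> \<in> T then d \<gamma> else 0)" for \<gamma>
  have "(\<Sum>\<gamma>\<in>S \<union> T. e \<gamma>) =
      (\<Sum>\<gamma>\<in>S \<union> T. if \<gamma> \<in> S then c \<gamma> else 0) + (\<Sum>\<gamma>\<in>S \<union> T. if \<gamma> \<in> T then d \<gamma> else 0)"
    unfolding e_def by (simp add: sum.distrib)
  also have "\<dots> = f + h" using S T by (simp add: sum.If_cases Int_absorb1 Int_absorb2)
  finally have "f + h = (\<Sum>\<gamma>\<in>S \<union> T. e \<gamma>)" by simp
  moreover have "\<forall>\<gamma>\<in>S \<union> T. e \<gamma> \<in> dual_deg s G \<gamma>"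
    using S T unfolding e_def by (auto intro!: dual_deg_add dual_deg_zero)
  ultimately show ?thesis using S T unfolding graded_dual_def by blast
qed

lemma graded_dual_induct [consumes 1, case_names zero homogeneous add]:
  assumes "f \<in> graded_dual s G" "P 0"
    and "\<And>\<gamma> h. h \<in> dual_deg s G \<gamma> \<Longrightarrow> P h"
    and "\<And>f h. f \<in> graded_dual s G \<Longrightarrow> h \<in> graded_dual s G \<Longrightarrow> P f \<Longrightarrow> P h \<Longrightarrow> P (f + h)"
  shows "P f"
proof -
  obtain S c where S: "finite S" "\<forall>\<gamma>\<in>S. c \<gamma> \<in> dual_deg s G \<gamma>" "f = (\<Sum>\<gamma>\<in>S. c \<gamma>)"
    using assms(1) unfolding graded_dual_def by blast
  have "(\<Sum>\<gamma>\<in>T. c \<gamma>) \<in> graded_dual s G \<and> P (\<Sum>\<gamma>\<in>T. c \<gamma>)" if "finite T" "T \<subseteq> S" for T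
    using that
  proof induction
    case (insert \<gamma> T)
    then have "c \<gamma> \<in> dual_deg s G \<gamma>" using S(2) by blast
    then have c: "c \<gamma> \<in> graded_dual s G" "P (c \<gamma>)"
      using assms(3) dual_deg_subset_graded_dual by blast+
    have IH: "(\<Sum>\<gamma>\<in>T. c \<gamma>) \<in> graded_dual s G" "P (\<Sum>\<gamma>\<in>T. c \<gamma>)"
      using insert by simp_all
    show ?case
      unfolding sum.insert[OF insert.hyps]
      using graded_dual_add[OF c(1) IH(1)] assms(4)[OF c(1) IH(1) c(2) IH(2)] by (rule conjI)
  qed (simp add: graded_dual_zero assms(2))
  then show ?thesis using S by blast
qed

lemma graded_dual_closed:
  assumes "\<And>f h. f \<in> graded_dual s G \<Longrightarrow> h \<in> graded_dual s G \<Longrightarrow> T (f + h) = T f + T h"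
    and "\<And>\<gamma> h. h \<in> dual_deg s G \<gamma> \<Longrightarrow> T h \<in> graded_dual s G"
    and "f \<in> graded_dual s G"
  shows "T f \<in> graded_dual s G"
  using assms(3)
proof (induction rule: graded_dual_induct)
  case zero
  have "T (0 + 0) = T 0 + T 0" using assms(1)[OF graded_dual_zero graded_dual_zero] .
  then have "T 0 = 0" by simp
  then show ?case using graded_dual_zero by (simp only:)
next
  case (add f h)
  then show ?case using assms(1)[OF add(1,2)] graded_dual_add[OF add(3,4)] by (simp only:)
qed (rule assms(2))

lemma graded_dual_eqI:
  fixes \<Phi> \<Psi> :: "('m::ab_group_add \<Rightarrow> 'k::field) \<Rightarrow> 'w::ab_group_add"
  assumes "\<And>f h. f \<in> graded_dual s G \<Longrightarrow> h \<in> graded_dual s G \<Longrightarrow> \<Phi> (f + h) = \<Phi> f + \<Phi> h"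
    and "\<And>f h. f \<in> graded_dual s G \<Longrightarrow> h \<in> graded_dual s G \<Longrightarrow> \<Psi> (f + h) = \<Psi> f + \<Psi> h"
    and "\<And>\<gamma> h. h \<in> dual_deg s G \<gamma> \<Longrightarrow> \<Phi> h = \<Psi> h"
    and "f \<in> graded_dual s G"
  shows "\<Phi> f = \<Psi> f"
  using assms(4)
proof (induction rule: graded_dual_induct)
  case zero
  have "\<Phi> (0 + 0) = \<Phi> 0 + \<Phi> 0" "\<Psi> (0 + 0) = \<Psi> 0 + \<Psi> 0"
    using assms(1,2)[OF graded_dual_zero graded_dual_zero] .
  then have "\<Phi> 0 = 0" "\<Psi> 0 = 0" by simp_all
  then show ?case by (simp only:)
next
  case (add f h)
  then show ?case using assms(1,2)[OF add(1,2)] by (simp only:)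
qed (rule assms(3))

lemma graded_dual_comp:
  assumes "lin_on s s UNIV \<beta>" "\<forall>\<delta>. \<forall>v\<in>G \<delta>. \<beta> v \<in> G \<delta>" "f \<in> graded_dual s G"
  shows "f \<circ> \<beta> \<in> graded_dual s G"
proof (rule graded_dual_closed[where T = "\<lambda>f. f \<circ> \<beta>", OF _ _ assms(3)])
  fix \<gamma> h assume "h \<in> dual_deg s G \<gamma>"
  then show "h \<circ> \<beta> \<in> graded_dual s G"
    using dual_deg_comp[OF assms(1,2)] dual_deg_subset_graded_dual by blast
qed (simp add: fun_eq_iff)

locale graded_dual_action =
  fixes sg :: "'k::field \<Rightarrow> 'g::ab_group_add \<Rightarrow> 'g"
    and Gg :: "'G::ab_group_add \<Rightarrow> 'g set"
    and br :: "'g \<Rightarrow> 'g \<Rightarrow> 'g" and \<alpha> :: "'g \<Rightarrow> 'g"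
    and \<epsilon> :: "'G \<Rightarrow> 'G \<Rightarrow> 'k"
    and sM :: "'k \<Rightarrow> 'm::ab_group_add \<Rightarrow> 'm" and GM :: "'G \<Rightarrow> 'm set"
    and \<rho> :: "'g \<Rightarrow> 'm \<Rightarrow> 'm" and \<beta> :: "'m \<Rightarrow> 'm"
    and \<rho>t :: "'g \<Rightarrow> ('m \<Rightarrow> 'k) \<Rightarrow> ('m \<Rightarrow> 'k)"
  assumes graded_g: "graded_space sg Gg"
    and bicharacter: "bicharacter \<epsilon>"
    and \<alpha>_even: "x \<in> Gg a \<Longrightarrow> \<alpha> x \<in> Gg a"
    and br_deg: "x \<in> Gg a \<Longrightarrow> y \<in> Gg b \<Longrightarrow> br x y \<in> Gg (a + b)"
    and graded_M: "graded_space sM GM"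
    and \<beta>_lin: "lin_on sM sM UNIV \<beta>"
    and \<beta>_even: "\<forall>\<delta>. \<forall>v\<in>GM \<delta>. \<beta> v \<in> GM \<delta>"
    and \<rho>_lin: "lin_on sM sM UNIV (\<rho> x)"
    and \<rho>_deg: "x \<in> Gg a \<Longrightarrow> v \<in> GM b \<Longrightarrow> \<rho> x v \<in> GM (a + b)"
    and \<rho>t_hom: "x \<in> Gg a \<Longrightarrow> f \<in> dual_deg sM GM \<gamma> \<Longrightarrow> \<rho>t x f = (\<lambda>m. - (\<epsilon> a \<gamma> * f (\<rho> x m)))"
    and \<rho>t_add: "f \<in> graded_dual sM GM \<Longrightarrow> h \<in> graded_dual sM GM \<Longrightarrow>
                 \<rho>t x (f + h) = \<rho>t x f + \<rho>t x h"
    and \<rho>t_add_left: "f \<in> graded_dual sM GM \<Longrightarrow> \<rho>t (x + y) f = \<rho>t x f + \<rho>t y f"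
begin

lemma \<epsilon>_add_left: "\<epsilon> (a + b) c = \<epsilon> a c * \<epsilon> b c"
  and \<epsilon>_add_right: "\<epsilon> a (b + c) = \<epsilon> a b * \<epsilon> a c"
  and \<epsilon>_swap: "\<epsilon> a b * \<epsilon> b a = 1"
  and \<epsilon>_nonzero: "\<epsilon> a b \<noteq> 0"
  using bicharacter unfolding bicharacter_def by blast+

lemma dual_action_dual_deg:
  assumes x: "x \<in> Gg a" and f: "f \<in> dual_deg sM GM \<gamma>"
  shows "\<rho>t x f \<in> dual_deg sM GM (a + \<gamma>)"
  unfolding \<rho>t_hom[OF assms] dual_deg_def
proof (intro CollectI conjI allI impI ballI)
  show "lin_on sM (*) UNIV (\<lambda>m. - (\<epsilon> a \<gamma> * f (\<rho> x m)))"
    using f \<rho>_lin[of x] unfolding dual_deg_def lin_on_def by (simp add: algebra_simps)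
next
  fix \<delta> m assume "a + \<gamma> + \<delta> \<noteq> 0" "m \<in> GM \<delta>"
  then have "\<gamma> + (a + \<delta>) \<noteq> 0" "\<rho> x m \<in> GM (a + \<delta>)"
    using \<rho>_deg[OF x] by (simp_all add: algebra_simps)
  then show "- (\<epsilon> a \<gamma> * f (\<rho> x m)) = 0" using f unfolding dual_deg_def by simp
qed

lemma dual_action_graded_dual:
  assumes "f \<in> graded_dual sM GM"
  shows "\<rho>t x f \<in> graded_dual sM GM"
  using graded_g
proof (induction x rule: graded_space_induct)
  case zero
  have "\<rho>t (0 + 0) f = \<rho>t 0 f + \<rho>t 0 f" using \<rho>t_add_left[OF assms] .
  then have "\<rho>t 0 f = 0" by simp
  then show ?case using graded_dual_zero by (simp only:)
next
  case (homogeneous a x)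
  show ?case
  proof (rule graded_dual_closed[where T = "\<rho>t x", OF \<rho>t_add _ assms])
    fix \<gamma> h assume "h \<in> dual_deg sM GM \<gamma>"
    then show "\<rho>t x h \<in> graded_dual sM GM"
      using dual_action_dual_deg[OF homogeneous] dual_deg_subset_graded_dual by blast
  qed
next
  case (add x y)
  then show ?case using \<rho>t_add_left[OF assms] graded_dual_add by (simp only:)
qed

lemma dual_action_bracket:
  assumes x: "x \<in> Gg a" and y: "y \<in> Gg b" and f: "f \<in> dual_deg sM GM \<gamma>"
  shows "\<rho>t (br x y) (f \<circ> \<beta>) = (\<lambda>m. - (\<epsilon> a \<gamma> * \<epsilon> b \<gamma>) * f (\<beta> (\<rho> (br x y) m)))"
  using \<rho>t_hom[OF br_deg[OF x y] dual_deg_comp[OF \<beta>_lin \<beta>_even f]] by (simp add: \<epsilon>_add_left)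

lemma dual_action_twisted_commutator:
  assumes x: "x \<in> Gg a" and y: "y \<in> Gg b" and f: "f \<in> dual_deg sM GM \<gamma>"
  shows "\<rho>t (\<alpha> x) (\<rho>t y f) - dual_scale (\<epsilon> a b) (\<rho>t (\<alpha> y) (\<rho>t x f)) =
    (\<lambda>m. - (\<epsilon> a \<gamma> * \<epsilon> b \<gamma>) * f (\<rho> x (\<rho> (\<alpha> y) m) - sM (\<epsilon> a b) (\<rho> y (\<rho> (\<alpha> x) m))))"
proof
  fix m
  have f_lin: "f (u - sM c w) = f u - c * f w" for u w c
    using f lin_on_diff[of sM "(*)" f] unfolding dual_deg_def lin_on_def by simp
  have "(\<rho>t (\<alpha> x) (\<rho>t y f) - dual_scale (\<epsilon> a b) (\<rho>t (\<alpha> y) (\<rho>t x f))) m =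
      \<epsilon> a b * \<epsilon> a \<gamma> * \<epsilon> b \<gamma> * f (\<rho> y (\<rho> (\<alpha> x) m))
      - (\<epsilon> a b * \<epsilon> b a) * \<epsilon> a \<gamma> * \<epsilon> b \<gamma> * f (\<rho> x (\<rho> (\<alpha> y) m))"
    using \<rho>t_hom[OF \<alpha>_even[OF x] dual_action_dual_deg[OF y f]] \<rho>t_hom[OF y f]
      \<rho>t_hom[OF \<alpha>_even[OF y] dual_action_dual_deg[OF x f]] \<rho>t_hom[OF x f]
    by (simp add: dual_scale_def \<epsilon>_add_right algebra_simps)
  also have "\<dots> = - (\<epsilon> a \<gamma> * \<epsilon> b \<gamma>) * f (\<rho> x (\<rho> (\<alpha> y) m) - sM (\<epsilon> a b) (\<rho> y (\<rho> (\<alpha> x) m)))"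
    unfolding \<epsilon>_swap f_lin by (simp add: algebra_simps)
  finally show "(\<rho>t (\<alpha> x) (\<rho>t y f) - dual_scale (\<epsilon> a b) (\<rho>t (\<alpha> y) (\<rho>t x f))) m =
      - (\<epsilon> a \<gamma> * \<epsilon> b \<gamma>) * f (\<rho> x (\<rho> (\<alpha> y) m) - sM (\<epsilon> a b) (\<rho> y (\<rho> (\<alpha> x) m)))" .
qed

lemma dual_rep_identity_homogeneous_iff:
  assumes x: "x \<in> Gg a" and y: "y \<in> Gg b" and f: "f \<in> dual_deg sM GM \<gamma>"
  shows "\<rho>t (br x y) (f \<circ> \<beta>) = \<rho>t (\<alpha> x) (\<rho>t y f) - dual_scale (\<epsilon> a b) (\<rho>t (\<alpha> y) (\<rho>t x f))
    \<longleftrightarrow> (\<forall>m. f (\<beta> (\<rho> (br x y) m)) = f (\<rho> x (\<rho> (\<alpha> y) m) - sM (\<epsilon> a b) (\<rho> y (\<rho> (\<alpha> x) m))))"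
  unfolding dual_action_bracket[OF assms] dual_action_twisted_commutator[OF assms]
  using \<epsilon>_nonzero by (simp add: fun_eq_iff)

lemma dual_rep_identity_iff:
  assumes x: "x \<in> Gg a" and y: "y \<in> Gg b"
  shows "(\<forall>f\<in>graded_dual sM GM.
      \<rho>t (br x y) (f \<circ> \<beta>) = \<rho>t (\<alpha> x) (\<rho>t y f) - dual_scale (\<epsilon> a b) (\<rho>t (\<alpha> y) (\<rho>t x f)))
    \<longleftrightarrow> (\<lambda>v. \<rho> x (\<rho> (\<alpha> y) v) - sM (\<epsilon> a b) (\<rho> y (\<rho> (\<alpha> x) v))) = \<beta> \<circ> \<rho> (br x y)"
    (is "(\<forall>f\<in>_. ?\<Phi> f = ?\<Psi> f) \<longleftrightarrow> ?D = _")
proof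
  assume identity: "\<forall>f\<in>graded_dual sM GM. ?\<Phi> f = ?\<Psi> f"
  show "?D = \<beta> \<circ> \<rho> (br x y)"
  proof (rule ext, rule dual_deg_eqI[OF graded_M])
    fix m \<gamma> f assume f: "f \<in> dual_deg sM GM \<gamma>"
    then have "?\<Phi> f = ?\<Psi> f" using identity dual_deg_subset_graded_dual by blast
    then show "f (?D m) = f ((\<beta> \<circ> \<rho> (br x y)) m)"
      using dual_rep_identity_homogeneous_iff[OF x y f] by simp
  qed
next
  assume condition: "?D = \<beta> \<circ> \<rho> (br x y)"
  have \<beta>_dual: "f \<circ> \<beta> \<in> graded_dual sM GM" if "f \<in> graded_dual sM GM" for f
    using graded_dual_comp[OF \<beta>_lin \<beta>_even that] .
  have dual_scale_add: "dual_scale c (u + w) = dual_scale c u + dual_scale c w"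
    for c and u w :: "'m \<Rightarrow> 'k"
    by (rule ext) (simp add: dual_scale_def algebra_simps)
  show "\<forall>f\<in>graded_dual sM GM. ?\<Phi> f = ?\<Psi> f"
  proof
    fix f assume "f \<in> graded_dual sM GM"
    then show "?\<Phi> f = ?\<Psi> f"
    proof (rule graded_dual_eqI[rotated 3])
      fix f h assume f: "f \<in> graded_dual sM GM" and h: "h \<in> graded_dual sM GM"
      have "(f + h) \<circ> \<beta> = (f \<circ> \<beta>) + (h \<circ> \<beta>)" by (rule ext) simp
      then show "?\<Phi> (f + h) = ?\<Phi> f + ?\<Phi> h"
        using \<rho>t_add[OF \<beta>_dual[OF f] \<beta>_dual[OF h]] by (simp only:)
      have "\<rho>t z (\<rho>t w (f + h)) = \<rho>t z (\<rho>t w f) + \<rho>t z (\<rho>t w h)" for z w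
        using \<rho>t_add[OF f h] \<rho>t_add[OF dual_action_graded_dual[OF f] dual_action_graded_dual[OF h]]
        by (simp only:)
      then show "?\<Psi> (f + h) = ?\<Psi> f + ?\<Psi> h"
        by (simp only: dual_scale_add) (simp add: algebra_simps)
    next
      fix \<gamma> h assume h: "h \<in> dual_deg sM GM \<gamma>"
      have "?D m = \<beta> (\<rho> (br x y) m)" for m using fun_cong[OF condition, of m] by simp
      then show "?\<Phi> h = ?\<Psi> h" using dual_rep_identity_homogeneous_iff[OF x y h] by simp
    qed
  qed
qed

end

theorem mainTheorem7:
  fixes sg :: "'k::field_char_0 \<Rightarrow> 'g::ab_group_add \<Rightarrow> 'g"
    and Gg :: "'G::ab_group_add \<Rightarrow> 'g set"
    and br :: "'g \<Rightarrow> 'g \<Rightarrow> 'g" and \<alpha> :: "'g \<Rightarrow> 'g"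
    and \<epsilon> :: "'G \<Rightarrow> 'G \<Rightarrow> 'k"
    and sM :: "'k \<Rightarrow> 'm::ab_group_add \<Rightarrow> 'm" and GM :: "'G \<Rightarrow> 'm set"
    and \<rho> :: "'g \<Rightarrow> 'm \<Rightarrow> 'm" and \<beta> :: "'m \<Rightarrow> 'm"
    and \<rho>t :: "'g \<Rightarrow> ('m \<Rightarrow> 'k) \<Rightarrow> ('m \<Rightarrow> 'k)"
  assumes g: "color_hom_lie sg Gg br \<alpha> \<epsilon>"
    and M: "graded_space sM GM"
    and \<beta>_lin: "lin_on sM sM UNIV \<beta>"
    and \<beta>_even: "\<forall>\<gamma>. \<forall>v\<in>GM \<gamma>. \<beta> v \<in> GM \<gamma>"
    and rep: "is_rep sg Gg br \<alpha> \<epsilon> sM UNIV GM \<rho> \<beta>"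
    and \<rho>t_hom: "\<forall>a \<gamma> x f. x \<in> Gg a \<longrightarrow> f \<in> dual_deg sM GM \<gamma> \<longrightarrow>
                    \<rho>t x f = (\<lambda>m. - (\<epsilon> a \<gamma> * f (\<rho> x m)))"
    and \<rho>t_lin: "\<forall>x. lin_on dual_scale dual_scale (graded_dual sM GM) (\<rho>t x)"
    and \<rho>t_lin2: "\<forall>x y. \<forall>f\<in>graded_dual sM GM. \<rho>t (x + y) f = \<rho>t x f + \<rho>t y f"
    and \<rho>t_lin3: "\<forall>c x. \<forall>f\<in>graded_dual sM GM. \<rho>t (sg c x) f = dual_scale c (\<rho>t x f)"
  shows "is_rep sg Gg br \<alpha> \<epsilon> dual_scale (graded_dual sM GM) (dual_deg sM GM) \<rho>t (\<lambda>f. f \<circ> \<beta>)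
     \<longleftrightarrow> (\<forall>a b x y. x \<in> Gg a \<longrightarrow> y \<in> Gg b \<longrightarrow>
            (\<lambda>v. \<rho> x (\<rho> (\<alpha> y) v) - sM (\<epsilon> a b) (\<rho> y (\<rho> (\<alpha> x) v))) = \<beta> \<circ> \<rho> (br x y))"
proof -
  have g_grading: "graded_space sg Gg \<and> bicharacter \<epsilon> \<and> (\<forall>a x. x \<in> Gg a \<longrightarrow> \<alpha> x \<in> Gg a) \<and>
      (\<forall>a b x y. x \<in> Gg a \<longrightarrow> y \<in> Gg b \<longrightarrow> br x y \<in> Gg (a + b))"
    using g unfolding color_hom_lie_def by (elim conjE) (intro conjI; assumption)
  have \<rho>_grading: "(\<forall>x. lin_on sM sM UNIV (\<rho> x)) \<and>
      (\<forall>a b x v. x \<in> Gg a \<longrightarrow> v \<in> GM b \<longrightarrow> \<rho> x v \<in> GM (a + b))"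
    using rep unfolding is_rep_def by (elim conjE) (intro conjI; assumption)
  interpret graded_dual_action sg Gg br \<alpha> \<epsilon> sM GM \<rho> \<beta> \<rho>t
    by (unfold_locales; use g_grading M \<beta>_lin \<beta>_even \<rho>_grading \<rho>t_hom \<rho>t_lin \<rho>t_lin2
        in \<open>simp add: lin_on_def\<close>)
  have "is_rep sg Gg br \<alpha> \<epsilon> dual_scale (graded_dual sM GM) (dual_deg sM GM) \<rho>t (\<lambda>f. f \<circ> \<beta>)
     \<longleftrightarrow> (\<forall>a b x y. x \<in> Gg a \<longrightarrow> y \<in> Gg b \<longrightarrow> (\<forall>f\<in>graded_dual sM GM.
          \<rho>t (br x y) (f \<circ> \<beta>) = \<rho>t (\<alpha> x) (\<rho>t y f) - dual_scale (\<epsilon> a b) (\<rho>t (\<alpha> y) (\<rho>t x f))))"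
    unfolding is_rep_def
    using dual_action_graded_dual dual_action_dual_deg \<rho>t_lin \<rho>t_lin2 \<rho>t_lin3 by simp
  also have "\<dots> \<longleftrightarrow> (\<forall>a b x y. x \<in> Gg a \<longrightarrow> y \<in> Gg b \<longrightarrow>
            (\<lambda>v. \<rho> x (\<rho> (\<alpha> y) v) - sM (\<epsilon> a b) (\<rho> y (\<rho> (\<alpha> x) v))) = \<beta> \<circ> \<rho> (br x y))"
    by (simp add: dual_rep_identity_iff)
  finally show ?thesis .
qed

end
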